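(* Let $\mathcal M\subseteq\bigcup_{K\ge1}\mathcal F_K\times\mathcal Q_K$ satisfy: (1) $K(F)<N$ for all $(F,Q)\in\mathcal M$; (2) for every $(F,Q)\in\mathcal M$, $\{F\}\times\mathcal Q_{K(F)}^{\mathrm{an}}\subseteq\mathcal M$. Then $\mathcal M$ is identifiable if and only if (a) for all $(F^1,Q^1),(F^2,Q^2)\in\mathcal M$, $F^1Q^1=F^2Q^2$ implies $\mathrm{co}(F^1)=\mathrm{co}(F^2)$, and (b) for every $(F,Q)\in\mathcal M$, with $K=K(F)$, the vectors $F_{\star 1}-F_{\star K},\dots,F_{\star K-1}-F_{\star K}$ are linearly independent.
   Context: Fix positive integers $M$ and $N$. For a positive integer $K$, $\mathcal F_K$ is the set of real $M\times K$ matrices with all entries in $[0,1]$, and $\mathcal Q_K$ is the set of real $K\times N$ matrices with entries in $[0,1]$ each of whose columns sums to $1$. $K(F)$ is the number of columns of $F$, $A_{\star j}$ the $j$-th column of $A$, $e_k$ the $k$-th standard basis vector. $\mathcal Q_K^{\mathrm{an}}$ is the set of $Q\in\mathcal Q_K$ such that for every $k$ there is $i$ with $Q_{\star i}=e_k$. For a matrix $A$, $\mathrm{co}(A)$ is the convex hull of the columns of $A$. $(F^1,Q^1)\sim(F^2,Q^2)$ means $F^1,F^2$ have the same number $K$ of columns and there is a permutation $\pi$ of $\{1,\dots,K\}$ with $F^2_{sk}=F^1_{s\pi(k)}$ and $Q^2_{ki}=Q^1_{\pi(k)i}$ for all $s,k,i$. $\mathcal M$ is identifiable if for all $(F^1,Q^1),(F^2,Q^2)\in\mathcal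 M$, $F^1Q^1=F^2Q^2$ implies $(F^1,Q^1)\sim(F^2,Q^2)$. *)

theory Defs
  imports "Jordan_Normal_Form.Matrix"
begin

text \<open>Matrices are Jordan_Normal_Form matrices (type real mat), which carry their
dimensions; m and n play the roles of M and N of the paper.\<close>

definition Fset :: "nat \<Rightarrow> nat \<Rightarrow> real mat set" where
  "Fset m K = {F \<in> carrier_mat m K. \<forall>s<m. \<forall>k<K. 0 \<le> F $$ (s,k) \<and> F $$ (s,k) \<le> 1}"

definition Qset :: "nat \<Rightarrow> nat \<Rightarrow> real mat set" where
  "Qset K n = {Q \<in> carrier_mat K n. (\<forall>k<K. \<forall>i<n. 0 \<le> Q $$ (k,i) \<and> Q $$ (k,i) \<le> 1)
      \<and> (\<forall>i<n. (\<Sum>k<K. Q $$ (k,i)) = 1)}"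

definition Qan :: "nat \<Rightarrow> nat \<Rightarrow> real mat set" where
  "Qan K n = {Q \<in> Qset K n. \<forall>k<K. \<exists>i<n. col Q i = unit_vec K k}"

definition co_cols :: "real mat \<Rightarrow> real vec set" where
  "co_cols A = {v. \<exists>(c::nat \<Rightarrow> real). (\<forall>j<dim_col A. 0 \<le> c j) \<and> (\<Sum>j<dim_col A. c j) = 1
      \<and> v = vec (dim_row A) (\<lambda>s. \<Sum>j<dim_col A. c j * (A $$ (s,j)))}"

definition equiv_pair :: "real mat \<times> real mat \<Rightarrow> real mat \<times> real mat \<Rightarrow> bool" where
  "equiv_pair P1 P2 = (case P1 of (F1,Q1) \<Rightarrow> case P2 of (F2,Q2) \<Rightarrow>
     dim_col F1 = dim_col F2 \<and>
     (\<exists>\<pi>. bij_betw \<pi> {..<dim_col F1} {..<dim_col F1} \<and>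
        (\<forall>s<dim_row F1. \<forall>k<dim_col F1. F2 $$ (s,k) = F1 $$ (s, \<pi> k)) \<and>
        (\<forall>k<dim_col F1. \<forall>i<dim_col Q1. Q2 $$ (k,i) = Q1 $$ (\<pi> k, i))))"

definition identifiable :: "(real mat \<times> real mat) set \<Rightarrow> bool" where
  "identifiable MM = (\<forall>P1\<in>MM. \<forall>P2\<in>MM. fst P1 * snd P1 = fst P2 * snd P2 \<longrightarrow> equiv_pair P1 P2)"

text \<open>Linear independence of the family F_{*1}-F_{*K}, ..., F_{*(K-1)}-F_{*K}
  (0-based: columns k < K-1 minus column K-1).\<close>
definition diffs_lin_indep :: "real mat \<Rightarrow> bool" where
  "diffs_lin_indep F = (let K = dim_col F in
     \<forall>(c::nat \<Rightarrow> real). (\<forall>s<dim_row F. (\<Sum>k<K-1. c k * ((F $$ (s,k)) - (F $$ (s,K-1)))) = 0)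
        \<longrightarrow> (\<forall>k<K-1. c k = 0))"

end

(*
  Condition (b) says that the columns of F are affinely independent. Then they are precisely
  the vertices of co(F): a column written as a convex combination of points of co(F) must use
  only points equal to itself. Hence co(F) determines F up to a permutation of its columns,
  and Q is recovered from F Q because each column of F Q is a convex combination of the
  columns of F with unique weights.

  Conversely, a nontrivial affine dependence d of the columns of F splits as d = S (v - w)
  with distinct probability vectors v, w. Since K < N, the matrices [I | v ... v] and
  [I | w ... w] are anchored, have the same product with F, and cannot be related by a
  column permutation of F, because their identity blocks force that permutation to be trivial.
*)

theory Submission
  imports Defs
begin

definition convex_weights :: "nat \<Rightarrow> (nat \<Rightarrow> real) \<Rightarrow> bool" where
  "convex_weights K c \<longleftrightarrow> (\<forall>k<K. 0 \<le> c k) \<and> (\<Sum>k<K. c k) = 1"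

definition affine_indep_cols :: "real mat \<Rightarrow> bool" where
  "affine_indep_cols F \<longleftrightarrow> (\<forall>d. (\<Sum>l<dim_col F. d l) = 0 \<and>
     (\<forall>s<dim_row F. (\<Sum>l<dim_col F. d l * F $$ (s,l)) = 0) \<longrightarrow> (\<forall>l<dim_col F. d l = 0))"

lemma index_mult_mat_sum:
  fixes A B :: "'a::comm_ring mat"
  assumes "A \<in> carrier_mat m K" "B \<in> carrier_mat K n" "s < m" "i < n"
  shows "(A * B) $$ (s,i) = (\<Sum>k<K. A $$ (s,k) * B $$ (k,i))"
  using assms by (auto simp: scalar_prod_def lessThan_atLeast0 intro!: sum.cong)

lemma sum_weighted_eq_diffs:
  fixes d x :: "nat \<Rightarrow> 'a::comm_ring"
  shows "(\<Sum>l<Suc K. d l * x l) = (\<Sum>k<K. d k * (x k - x K)) + (\<Sum>l<Suc K. d l) * x K"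
  by (simp add: right_diff_distrib sum_subtractf sum_distrib_right distrib_right)

lemma diffs_lin_indep_iff_affine_indep_cols:
  "diffs_lin_indep F \<longleftrightarrow> affine_indep_cols F"
proof (cases "dim_col F")
  case 0
  then show ?thesis by (simp add: diffs_lin_indep_def affine_indep_cols_def)
next
  case (Suc K)
  note expand = sum_weighted_eq_diffs[of d "\<lambda>l. F $$ (s,l)" K for d s]
  show ?thesis
  proof
    assume indep: "diffs_lin_indep F"
    show "affine_indep_cols F"
      unfolding affine_indep_cols_def
    proof (intro allI impI, elim conjE)
      fix d :: "nat \<Rightarrow> real" and l
      assume sum0: "(\<Sum>l<dim_col F. d l) = 0"
        and comb0: "\<forall>s<dim_row F. (\<Sum>l<dim_col F. d l * F $$ (s,l)) = 0" and l: "l < dim_col F"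
      have "\<forall>k<K. d k = 0"
        using indep comb0 sum0 unfolding diffs_lin_indep_def Suc expand by simp
      moreover from this have "d K = 0" using sum0 Suc by simp
      ultimately show "d l = 0" using l Suc less_Suc_eq by auto
    qed
  next
    assume indep: "affine_indep_cols F"
    show "diffs_lin_indep F"
      unfolding diffs_lin_indep_def Let_def Suc diff_Suc_1
    proof (intro allI impI)
      fix c :: "nat \<Rightarrow> real" and k
      assume comb0: "\<forall>s<dim_row F. (\<Sum>k<K. c k * (F $$ (s,k) - F $$ (s,K))) = 0" and k: "k < K"
      define d where "d l = (if l < K then c l else - (\<Sum>j<K. c j))" for l
      have dK: "(\<Sum>k<K. d k * x k) = (\<Sum>k<K. c k * x k)" for x :: "nat \<Rightarrow> real"
        by (simp add: d_def)
      have sum0: "(\<Sum>l<Suc K. d l) = 0" using dK[of "\<lambda>_. 1"] by (simp add: d_def)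
      moreover have "(\<Sum>l<Suc K. d l * F $$ (s,l)) = 0" if "s < dim_row F" for s
        using comb0 that expand[of d s] dK[of "\<lambda>k. F $$ (s,k) - F $$ (s,K)"] sum0 by simp
      ultimately have "d k = 0" using indep k Suc unfolding affine_indep_cols_def by auto
      then show "c k = 0" using k by (simp add: d_def)
    qed
  qed
qed

lemma affine_indep_cols_weights_unique:
  assumes "affine_indep_cols F"
    and "(\<Sum>l<dim_col F. a l) = (\<Sum>l<dim_col F. b l)"
    and "\<forall>s<dim_row F. (\<Sum>l<dim_col F. a l * F $$ (s,l)) = (\<Sum>l<dim_col F. b l * F $$ (s,l))"
    and "l < dim_col F"
  shows "a l = b l"
  using assms(1)[unfolded affine_indep_cols_def, rule_format, of "\<lambda>l. a l - b l"] assms(2-4)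
  by (simp add: sum_subtractf left_diff_distrib)

lemma sum_lessThan_delta_mult:
  fixes x :: "nat \<Rightarrow> 'a::comm_semiring_1"
  assumes "k < K"
  shows "(\<Sum>l<K. of_bool (l = k) * x l) = x k"
  using assms by (simp add: of_bool_def if_distrib[of "\<lambda>c. c * _"] cong: if_cong)

lemma affine_indep_cols_inj_on_col:
  assumes "affine_indep_cols F"
  shows "inj_on (col F) {..<dim_col F}"
proof (rule inj_onI)
  fix k k' assume k: "k \<in> {..<dim_col F}" and k': "k' \<in> {..<dim_col F}"
    and eq: "col F k = col F k'"
  have "F $$ (s,k) = F $$ (s,k')" if "s < dim_row F" for s
    using arg_cong[OF eq, of "\<lambda>v. v $ s"] k k' that by simp
  then have "of_bool (k = k) = (of_bool (k = k') :: real)"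
    using k k' affine_indep_cols_weights_unique[OF assms,
        of "\<lambda>l. of_bool (l = k)" "\<lambda>l. of_bool (l = k')" k]
    by (simp add: sum_lessThan_delta_mult)
  then show "k = k'" by simp
qed

lemma col_mem_co_cols:
  assumes "k < dim_col F"
  shows "col F k \<in> co_cols F"
proof -
  have "col F k = vec (dim_row F) (\<lambda>s. \<Sum>j<dim_col F. of_bool (j = k) * F $$ (s,j))"
    using assms by (intro eq_vecI) (simp_all add: sum_lessThan_delta_mult)
  then show ?thesis
    unfolding co_cols_def using assms by (intro CollectI exI[of _ "\<lambda>j. of_bool (j = k)"]) simp
qed

lemma mem_co_colsE:
  assumes "v \<in> co_cols A"
  obtains c where "convex_weights (dim_col A) c" "dim_vec v = dim_row A"
    "\<And>s. s < dim_row A \<Longrightarrow> v $ s = (\<Sum>j<dim_col A. c j * A $$ (s,j))"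
  using assms unfolding co_cols_def convex_weights_def by auto

lemma convex_weights_obtain_pos:
  assumes "convex_weights J b"
  obtains j where "j < J" "0 < b j"
proof (rule ccontr)
  assume "\<not> thesis"
  then have "\<forall>j<J. b j \<le> 0" using that by force
  then have "(\<Sum>j<J. b j) \<le> 0" by (intro sum_nonpos) auto
  with assms show False by (simp add: convex_weights_def)
qed

lemma convex_mixture_eq_delta:
  assumes b: "convex_weights J b" and A: "\<And>j. j < J \<Longrightarrow> convex_weights L (A j)"
    and mix: "\<And>l. l < L \<Longrightarrow> (\<Sum>j<J. b j * A j l) = of_bool (l = k)" and k: "k < L"
  obtains j where "j < J" "\<And>l. l < L \<Longrightarrow> A j l = of_bool (l = k)"
proof -
  obtain j where j: "j < J" "0 < b j" using convex_weights_obtain_pos[OF b] .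
  have off: "A j l = 0" if l: "l < L" "l \<noteq> k" for l
  proof -
    have "b j * A j l \<le> (\<Sum>j<J. b j * A j l)"
      using j l A b by (intro member_le_sum) (auto simp: convex_weights_def)
    also have "\<dots> = 0" using mix l by simp
    finally show "A j l = 0"
      using j l A[OF j(1)] by (simp add: convex_weights_def mult_le_0_iff order.antisym)
  qed
  have "(\<Sum>l<L. A j l) = (\<Sum>l<L. of_bool (l = k) * A j k)"
    using off by (intro sum.cong) auto
  then have "A j k = 1" using A[OF j(1)] k by (simp add: convex_weights_def)
  with off have "A j l = of_bool (l = k)" if "l < L" for l
    using that by (cases "l = k") auto
  with j show thesis using that by blast
qed

lemma affine_indep_cols_mixture_eq_delta:
  assumes indep: "affine_indep_cols F" and k: "k < dim_col F"
    and A: "\<And>j. j < J \<Longrightarrow> convex_weights (dim_col F) (A j)" and b: "convex_weights J b"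
    and comb: "\<And>s. s < dim_row F \<Longrightarrow>
      (\<Sum>j<J. b j * (\<Sum>l<dim_col F. A j l * F $$ (s,l))) = F $$ (s,k)"
    and l: "l < dim_col F"
  shows "(\<Sum>j<J. b j * A j l) = of_bool (l = k)"
proof (rule affine_indep_cols_weights_unique[OF indep _ _ l])
  let ?K = "dim_col F"
  have "(\<Sum>l<?K. \<Sum>j<J. b j * A j l) = (\<Sum>j<J. b j * (\<Sum>l<?K. A j l))"
    by (simp add: sum_distrib_left sum.swap[of _ "{..<?K}"])
  also have "\<dots> = 1" using A b by (simp add: convex_weights_def)
  finally show "(\<Sum>l<?K. \<Sum>j<J. b j * A j l) = (\<Sum>l<?K. of_bool (l = k))"
    using k by simp
  show "\<forall>s<dim_row F. (\<Sum>l<?K. (\<Sum>j<J. b j * A j l) * F $$ (s,l)) =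
      (\<Sum>l<?K. of_bool (l = k) * F $$ (s,l))"
  proof (intro allI impI)
    fix s assume s: "s < dim_row F"
    have "(\<Sum>l<?K. (\<Sum>j<J. b j * A j l) * F $$ (s,l))
        = (\<Sum>j<J. b j * (\<Sum>l<?K. A j l * F $$ (s,l)))"
      by (simp add: sum_distrib_left sum_distrib_right mult.assoc sum.swap[of _ "{..<?K}"])
    also have "\<dots> = (\<Sum>l<?K. of_bool (l = k) * F $$ (s,l))"
      using comb[OF s] k by (simp add: sum_lessThan_delta_mult)
    finally show "(\<Sum>l<?K. (\<Sum>j<J. b j * A j l) * F $$ (s,l)) =
        (\<Sum>l<?K. of_bool (l = k) * F $$ (s,l))" .
  qed
qed

lemma co_cols_eq_obtain_col:
  assumes indep: "affine_indep_cols F" and co: "co_cols F = co_cols G"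
    and rows: "dim_row G = dim_row F" and k: "k < dim_col F"
  obtains j where "j < dim_col G" "col G j = col F k"
proof -
  let ?K = "dim_col F" and ?J = "dim_col G"
  obtain b where b: "convex_weights ?J b"
    and colF: "\<And>s. s < dim_row F \<Longrightarrow> F $$ (s,k) = (\<Sum>j<?J. b j * G $$ (s,j))"
    using col_mem_co_cols[OF k] co rows k by (auto elim!: mem_co_colsE)
  have "\<exists>a. convex_weights ?K a \<and> (\<forall>s<dim_row F. G $$ (s,j) = (\<Sum>l<?K. a l * F $$ (s,l)))"
    if "j < ?J" for j
  proof -
    have "col G j \<in> co_cols F" using col_mem_co_cols[OF that] co by simp
    then show ?thesis using rows that by (auto elim!: mem_co_colsE)
  qed
  then obtain A where A: "\<And>j. j < ?J \<Longrightarrow> convex_weights ?K (A j)"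
    and colG: "\<And>j s. j < ?J \<Longrightarrow> s < dim_row F \<Longrightarrow> G $$ (s,j) = (\<Sum>l<?K. A j l * F $$ (s,l))"
    by metis
  have mix: "(\<Sum>j<?J. b j * A j l) = of_bool (l = k)" if "l < ?K" for l
    using affine_indep_cols_mixture_eq_delta[OF indep k A b _ that] colF colG by simp
  obtain j where j: "j < ?J" and Aj: "\<And>l. l < ?K \<Longrightarrow> A j l = of_bool (l = k)"
    using convex_mixture_eq_delta[OF b A mix k] by blast
  have "G $$ (s,j) = F $$ (s,k)" if s: "s < dim_row F" for s
  proof -
    have "G $$ (s,j) = (\<Sum>l<?K. of_bool (l = k) * F $$ (s,l))"
      unfolding colG[OF j s] by (intro sum.cong) (simp_all add: Aj)
    then show ?thesis using k by (simp add: sum_lessThan_delta_mult)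
  qed
  then have "col G j = col F k"
    using j k rows by (intro eq_vecI) simp_all
  with j show thesis by (rule that)
qed

lemma co_cols_eq_obtain_perm:
  assumes indepF: "affine_indep_cols F" and indepG: "affine_indep_cols G"
    and co: "co_cols F = co_cols G" and rows: "dim_row F = dim_row G"
  obtains g where "dim_col G = dim_col F" "bij_betw g {..<dim_col F} {..<dim_col F}"
    "\<And>k. k < dim_col F \<Longrightarrow> col F (g k) = col G k"
proof -
  let ?K = "dim_col F" and ?J = "dim_col G"
  have "\<exists>j. j < ?J \<and> col G j = col F k" if "k < ?K" for k
    using co_cols_eq_obtain_col[OF indepF co rows[symmetric] that] by blast
  then obtain f where f: "\<And>k. k < ?K \<Longrightarrow> f k < ?J \<and> col G (f k) = col F k"
    by metis
  have "\<exists>k. k < ?K \<and> col F k = col G j" if "j < ?J" for j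
    using co_cols_eq_obtain_col[OF indepG co[symmetric] rows that] by blast
  then obtain g where g: "\<And>j. j < ?J \<Longrightarrow> g j < ?K \<and> col F (g j) = col G j"
    by metis
  have "inj_on f {..<?K}"
    using inj_onD[OF affine_indep_cols_inj_on_col[OF indepF]] f by (intro inj_onI) (metis lessThan_iff)
  then have "?K \<le> ?J" using card_inj_on_le[of f "{..<?K}" "{..<?J}"] f by auto
  have inj_g: "inj_on g {..<?J}"
    using inj_onD[OF affine_indep_cols_inj_on_col[OF indepG]] g by (intro inj_onI) (metis lessThan_iff)
  then have "?J \<le> ?K" using card_inj_on_le[of g "{..<?J}" "{..<?K}"] g by auto
  with \<open>?K \<le> ?J\<close> have KJ: "?J = ?K" by simp
  have "bij_betw g {..<?K} {..<?K}"
    using inj_g g KJ endo_inj_surj[of "{..<?K}" g] unfolding bij_betw_def by auto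
  with KJ g show thesis using that by auto
qed

lemma co_cols_subset_permute_cols:
  assumes bij: "bij_betw \<pi> {..<K} {..<K}" and "dim_col A = K" "dim_col B = K"
    and rows: "dim_row A = dim_row B"
    and perm: "\<forall>s<dim_row A. \<forall>k<K. B $$ (s,k) = A $$ (s,\<pi> k)"
  shows "co_cols A \<subseteq> co_cols B"
proof
  fix v assume "v \<in> co_cols A"
  then obtain c where c: "convex_weights K c" and dim: "dim_vec v = dim_row A"
    and v: "\<And>s. s < dim_row A \<Longrightarrow> v $ s = (\<Sum>j<K. c j * A $$ (s,j))"
    using assms by (auto elim!: mem_co_colsE)
  have "convex_weights K (c \<circ> \<pi>)"
    using c bij_betwE[OF bij] sum.reindex_bij_betw[OF bij, of c] by (auto simp: convex_weights_def)
  moreover have "v $ s = (\<Sum>k<K. c (\<pi> k) * B $$ (s,k))" if s: "s < dim_row A" for s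
  proof -
    have "(\<Sum>k<K. c (\<pi> k) * B $$ (s,k)) = (\<Sum>k<K. c (\<pi> k) * A $$ (s,\<pi> k))"
      using perm s by (intro sum.cong) auto
    also have "\<dots> = (\<Sum>j<K. c j * A $$ (s,j))"
      using sum.reindex_bij_betw[OF bij, of "\<lambda>j. c j * A $$ (s,j)"] .
    finally show ?thesis using v[OF s] by simp
  qed
  ultimately show "v \<in> co_cols B"
    unfolding co_cols_def convex_weights_def using assms dim
    by (intro CollectI exI[of _ "c \<circ> \<pi>"]) (auto intro!: eq_vecI)
qed

lemma co_cols_permute_cols:
  assumes bij: "bij_betw \<pi> {..<K} {..<K}" and cols: "dim_col A = K" "dim_col B = K"
    and rows: "dim_row A = dim_row B"
    and perm: "\<forall>s<dim_row A. \<forall>k<K. B $$ (s,k) = A $$ (s,\<pi> k)"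
  shows "co_cols A = co_cols B"
proof
  show "co_cols A \<subseteq> co_cols B" by (rule co_cols_subset_permute_cols[OF assms])
  let ?\<sigma> = "inv_into {..<K} \<pi>"
  have bij': "bij_betw ?\<sigma> {..<K} {..<K}" by (rule bij_betw_inv_into[OF bij])
  have "\<forall>s<dim_row B. \<forall>k<K. A $$ (s,k) = B $$ (s,?\<sigma> k)"
    using perm rows bij_betwE[OF bij'] bij_betw_inv_into_right[OF bij] by (metis lessThan_iff)
  then show "co_cols B \<subseteq> co_cols A"
    using co_cols_subset_permute_cols[OF bij'] cols rows by simp
qed

lemma equiv_pair_imp_co_cols_eq:
  assumes "equiv_pair (F1,Q1) (F2,Q2)" and "dim_row F1 = dim_row F2"
  shows "co_cols F1 = co_cols F2"
proof -
  obtain \<pi> where "dim_col F2 = dim_col F1" "bij_betw \<pi> {..<dim_col F1} {..<dim_col F1}"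
    "\<forall>s<dim_row F1. \<forall>k<dim_col F1. F2 $$ (s,k) = F1 $$ (s, \<pi> k)"
    using assms(1) unfolding equiv_pair_def by auto
  then show ?thesis using co_cols_permute_cols assms(2) by metis
qed

lemma affine_indep_cols_mult_left_cancel:
  assumes indep: "affine_indep_cols F" and F: "F \<in> carrier_mat m K"
    and Q: "Q \<in> carrier_mat K n" and Q': "Q' \<in> carrier_mat K n"
    and sums: "\<And>i. i < n \<Longrightarrow> (\<Sum>k<K. Q $$ (k,i)) = (\<Sum>k<K. Q' $$ (k,i))"
    and prod: "F * Q = F * Q'"
  shows "Q = Q'"
proof (rule eq_matI)
  fix k i assume "k < dim_row Q'" "i < dim_col Q'"
  then have k: "k < K" and i: "i < n" using Q' by auto
  have "(\<Sum>l<K. F $$ (s,l) * Q $$ (l,i)) = (\<Sum>l<K. F $$ (s,l) * Q' $$ (l,i))" if "s < m" for s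
    using prod index_mult_mat_sum[OF F Q that i] index_mult_mat_sum[OF F Q' that i] by simp
  then show "Q $$ (k,i) = Q' $$ (k,i)"
    using affine_indep_cols_weights_unique[OF indep, of "\<lambda>l. Q $$ (l,i)" "\<lambda>l. Q' $$ (l,i)" k]
      sums[OF i] F k by (simp add: mult.commute)
qed (use Q Q' in auto)

lemma equiv_pair_if_co_cols_eq:
  assumes F1: "F1 \<in> carrier_mat m K1" and Q1: "Q1 \<in> Qset K1 n"
    and F2: "F2 \<in> carrier_mat m K2" and Q2: "Q2 \<in> Qset K2 n"
    and indep1: "affine_indep_cols F1" and indep2: "affine_indep_cols F2"
    and co: "co_cols F1 = co_cols F2" and prod: "F1 * Q1 = F2 * Q2"
  shows "equiv_pair (F1,Q1) (F2,Q2)"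
proof -
  obtain g where K: "K2 = K1" and g: "bij_betw g {..<K1} {..<K1}"
    and cols: "\<And>k. k < K1 \<Longrightarrow> col F1 (g k) = col F2 k"
    using co_cols_eq_obtain_perm[OF indep1 indep2 co] F1 F2 by auto
  have F2c: "F2 \<in> carrier_mat m K1" and Q1c: "Q1 \<in> carrier_mat K1 n"
    and Q2c: "Q2 \<in> carrier_mat K1 n"
    using F2 Q1 Q2 K by (auto simp: Qset_def)
  have entries: "F2 $$ (s,k) = F1 $$ (s, g k)" if s: "s < m" and k: "k < K1" for s k
    using arg_cong[OF cols[OF k], of "\<lambda>v. v $ s"] s k bij_betwE[OF g] F1 F2c by simp
  define Q1g where "Q1g = mat K1 n (\<lambda>(k,i). Q1 $$ (g k, i))"
  have Q1g: "Q1g \<in> carrier_mat K1 n" by (simp add: Q1g_def)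
  have "F2 * Q1g = F1 * Q1"
  proof (rule eq_matI)
    fix s i assume "s < dim_row (F1 * Q1)" "i < dim_col (F1 * Q1)"
    then have s: "s < m" and i: "i < n" using F1 Q1c by auto
    have "(\<Sum>l<K1. F2 $$ (s,l) * Q1g $$ (l,i)) = (\<Sum>l<K1. F1 $$ (s, g l) * Q1 $$ (g l, i))"
      using entries s i by (intro sum.cong) (auto simp: Q1g_def)
    also have "\<dots> = (\<Sum>l<K1. F1 $$ (s,l) * Q1 $$ (l,i))"
      using sum.reindex_bij_betw[OF g, of "\<lambda>l. F1 $$ (s,l) * Q1 $$ (l,i)"] .
    finally show "(F2 * Q1g) $$ (s,i) = (F1 * Q1) $$ (s,i)"
      using index_mult_mat_sum[OF F2c Q1g s i] index_mult_mat_sum[OF F1 Q1c s i] by simp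
  qed (use F1 F2c Q1c Q1g in auto)
  moreover have "(\<Sum>k<K1. Q1g $$ (k,i)) = (\<Sum>k<K1. Q2 $$ (k,i))" if i: "i < n" for i
  proof -
    have "(\<Sum>k<K1. Q1g $$ (k,i)) = (\<Sum>k<K1. Q1 $$ (k,i))"
      using sum.reindex_bij_betw[OF g, of "\<lambda>k. Q1 $$ (k,i)"] i by (simp add: Q1g_def)
    then show ?thesis using Q1 Q2 K i by (simp add: Qset_def)
  qed
  ultimately have "Q1g = Q2"
    using affine_indep_cols_mult_left_cancel[OF indep2 F2c Q1g Q2c] prod by simp
  then show ?thesis
    unfolding equiv_pair_def using F1 F2c Q1c g entries
    by (auto simp: Q1g_def intro!: exI[of _ g])
qed

lemma zero_sum_obtain_convex_weights:
  fixes d :: "nat \<Rightarrow> real"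
  assumes sum0: "(\<Sum>l<K. d l) = 0" and k0: "k0 < K" "d k0 \<noteq> 0"
  obtains S v w where "0 < S" "convex_weights K v" "convex_weights K w" "v k0 \<noteq> w k0"
    "\<And>l. d l = S * (v l - w l)"
proof -
  define S where "S = (\<Sum>l<K. max (d l) 0)"
  have pos_neg: "max (d l) 0 - max (- d l) 0 = d l" for l by (simp add: max_def)
  have "(\<Sum>l<K. max (d l) 0) - (\<Sum>l<K. max (- d l) 0) = 0"
    using sum0 by (simp add: sum_subtractf[symmetric] pos_neg)
  then have S_neg: "(\<Sum>l<K. max (- d l) 0) = S" by (simp add: S_def)
  have "max (d k0) 0 \<le> S" unfolding S_def using k0 by (intro member_le_sum) auto
  moreover have "max (- d k0) 0 \<le> S" unfolding S_neg[symmetric] using k0 by (intro member_le_sum) auto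
  ultimately have S: "0 < S" using k0 by (simp add: max_def split: if_splits)
  define v where "v l = max (d l) 0 / S" for l
  define w where "w l = max (- d l) 0 / S" for l
  have "convex_weights K v" "convex_weights K w"
    using S S_neg unfolding convex_weights_def v_def w_def S_def
    by (simp_all add: sum_divide_distrib[symmetric])
  moreover have "d l = S * (v l - w l)" for l
    using S by (simp add: v_def w_def diff_divide_distrib[symmetric] pos_neg)
  moreover have "v k0 \<noteq> w k0" using k0 S by (auto simp: v_def w_def max_def)
  ultimately show thesis using S that by blast
qed

definition anchor_mat :: "nat \<Rightarrow> nat \<Rightarrow> (nat \<Rightarrow> real) \<Rightarrow> real mat" where
  "anchor_mat K n u = mat K n (\<lambda>(k,i). if i < K then of_bool (k = i) else u k)"

lemma anchor_mat_mem_Qan: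
  assumes "K \<le> n" and u: "convex_weights K u"
  shows "anchor_mat K n u \<in> Qan K n"
proof -
  have "u k \<le> 1" if "k < K" for k
    using u that member_le_sum[of k "{..<K}" u] by (auto simp: convex_weights_def)
  moreover have "(\<Sum>k<K. if i < K then of_bool (k = i) else u k) = 1" for i
    using u by (cases "i < K") (simp_all add: convex_weights_def)
  ultimately have "anchor_mat K n u \<in> Qset K n"
    using u unfolding Qset_def anchor_mat_def convex_weights_def by auto
  moreover have "col (anchor_mat K n u) k = unit_vec K k" if "k < K" for k
    using that assms(1) by (intro eq_vecI) (auto simp: anchor_mat_def unit_vec_def)
  ultimately show ?thesis
    unfolding Qan_def using assms(1) by (auto intro: order.strict_trans2)
qed

lemma mult_anchor_mat_eq:
  assumes F: "F \<in> carrier_mat m K"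
    and same: "\<And>s. s < m \<Longrightarrow> (\<Sum>k<K. u k * F $$ (s,k)) = (\<Sum>k<K. v k * F $$ (s,k))"
  shows "F * anchor_mat K n u = F * anchor_mat K n v"
proof (rule eq_matI)
  have anchors: "anchor_mat K n u \<in> carrier_mat K n" "anchor_mat K n v \<in> carrier_mat K n"
    by (simp_all add: anchor_mat_def)
  fix s i assume "s < dim_row (F * anchor_mat K n v)" "i < dim_col (F * anchor_mat K n v)"
  then have s: "s < m" and i: "i < n" using F anchors by auto
  show "(F * anchor_mat K n u) $$ (s,i) = (F * anchor_mat K n v) $$ (s,i)"
    unfolding index_mult_mat_sum[OF F anchors(1) s i] index_mult_mat_sum[OF F anchors(2) s i]
    using same[OF s] i by (cases "i < K") (auto simp: anchor_mat_def mult.commute intro!: sum.cong)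
qed (simp_all add: anchor_mat_def)

lemma anchor_mat_permute_eq:
  assumes bij: "bij_betw \<pi> {..<K} {..<K}" and Kn: "K < n"
    and perm: "\<forall>k<K. \<forall>i<n. anchor_mat K n v $$ (k,i) = anchor_mat K n u $$ (\<pi> k, i)"
    and k: "k < K"
  shows "u k = v k"
proof -
  have \<pi>k: "\<pi> k < K" using bij_betwE[OF bij] k by blast
  have "\<pi> k = k"
    using perm[rule_format, OF k, of k] k \<pi>k Kn by (simp add: anchor_mat_def)
  then show ?thesis
    using perm[rule_format, OF k Kn] k \<pi>k Kn by (simp add: anchor_mat_def)
qed

lemma identifiable_imp_affine_indep_cols:
  assumes F: "F \<in> carrier_mat m K" and Kn: "K < n"
    and anchors: "\<forall>Q\<in>Qan K n. (F,Q) \<in> MM" and idf: "identifiable MM"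
  shows "affine_indep_cols F"
proof (rule ccontr)
  assume "\<not> affine_indep_cols F"
  then obtain d k0 where sum0: "(\<Sum>l<K. d l) = 0"
    and comb0: "\<forall>s<m. (\<Sum>l<K. d l * F $$ (s,l)) = 0" and k0: "k0 < K" "d k0 \<noteq> 0"
    using F unfolding affine_indep_cols_def by auto
  obtain S v w where S: "0 < S" and v: "convex_weights K v" and w: "convex_weights K w"
    and vw: "v k0 \<noteq> w k0" and d: "\<And>l. d l = S * (v l - w l)"
    using zero_sum_obtain_convex_weights[OF sum0 k0] by blast
  have "(\<Sum>l<K. v l * F $$ (s,l)) = (\<Sum>l<K. w l * F $$ (s,l))" if "s < m" for s
    using comb0 that S
    by (simp add: d algebra_simps sum_subtractf sum_distrib_left[symmetric])
  then have "F * anchor_mat K n v = F * anchor_mat K n w"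
    by (rule mult_anchor_mat_eq[OF F])
  moreover have "(F, anchor_mat K n v) \<in> MM" "(F, anchor_mat K n w) \<in> MM"
    using anchors anchor_mat_mem_Qan Kn v w by auto
  ultimately have "equiv_pair (F, anchor_mat K n v) (F, anchor_mat K n w)"
    using idf unfolding identifiable_def by fastforce
  then obtain \<pi> where "bij_betw \<pi> {..<K} {..<K}"
    and "\<forall>k<K. \<forall>i<n. anchor_mat K n w $$ (k,i) = anchor_mat K n v $$ (\<pi> k, i)"
    using F unfolding equiv_pair_def by (auto simp: anchor_mat_def)
  then have "v k0 = w k0" using anchor_mat_permute_eq Kn k0 by blast
  with vw show False ..
qed

lemma identifiable_if_co_cols_eq_and_affine_indep:
  assumes carrier: "\<And>F Q. (F,Q) \<in> MM \<Longrightarrow> \<exists>K. F \<in> carrier_mat m K \<and> Q \<in> Qset K n"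
    and hull: "\<And>F1 Q1 F2 Q2. (F1,Q1) \<in> MM \<Longrightarrow> (F2,Q2) \<in> MM \<Longrightarrow> F1 * Q1 = F2 * Q2 \<Longrightarrow>
      co_cols F1 = co_cols F2"
    and indep: "\<And>F Q. (F,Q) \<in> MM \<Longrightarrow> affine_indep_cols F"
  shows "identifiable MM"
  unfolding identifiable_def
proof (intro ballI impI)
  fix P1 P2 assume "P1 \<in> MM" "P2 \<in> MM" "fst P1 * snd P1 = fst P2 * snd P2"
  moreover obtain F1 Q1 F2 Q2 where P: "P1 = (F1,Q1)" "P2 = (F2,Q2)" by fastforce
  ultimately have FQ1: "(F1,Q1) \<in> MM" and FQ2: "(F2,Q2) \<in> MM" and prod: "F1 * Q1 = F2 * Q2"
    by simp_all
  obtain K1 K2 where F1: "F1 \<in> carrier_mat m K1" and Q1: "Q1 \<in> Qset K1 n"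
    and F2: "F2 \<in> carrier_mat m K2" and Q2: "Q2 \<in> Qset K2 n"
    using carrier[OF FQ1] carrier[OF FQ2] by blast
  show "equiv_pair P1 P2"
    unfolding P using equiv_pair_if_co_cols_eq[OF F1 Q1 F2 Q2 indep[OF FQ1] indep[OF FQ2]
        hull[OF FQ1 FQ2 prod] prod] .
qed

theorem mainTheorem5:
  fixes m n :: nat and MM :: "(real mat \<times> real mat) set"
  assumes "0 < m" and "0 < n"
    and "MM \<subseteq> (\<Union>K\<in>{1..}. Fset m K \<times> Qset K n)"
    and "\<forall>(F,Q)\<in>MM. dim_col F < n"
    and "\<forall>(F,Q)\<in>MM. \<forall>Q'\<in>Qan (dim_col F) n. (F,Q') \<in> MM"
  shows "identifiable MM \<longleftrightarrow>
     ((\<forall>(F1,Q1)\<in>MM. \<forall>(F2,Q2)\<in>MM. F1 * Q1 = F2 * Q2 \<longrightarrow> co_cols F1 = co_cols F2) \<and>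
      (\<forall>(F,Q)\<in>MM. diffs_lin_indep F))"
proof -
  have carrier: "\<exists>K. F \<in> carrier_mat m K \<and> Q \<in> Qset K n" if "(F,Q) \<in> MM" for F Q
    using assms(3) that by (auto simp: Fset_def)
  have indep: "diffs_lin_indep F" if idf: "identifiable MM" and FQ: "(F,Q) \<in> MM" for F Q
  proof -
    obtain K where F: "F \<in> carrier_mat m K" using carrier[OF FQ] by blast
    have "affine_indep_cols F"
      using identifiable_imp_affine_indep_cols[OF F _ _ idf] assms(4,5) FQ F by fastforce
    then show ?thesis by (simp add: diffs_lin_indep_iff_affine_indep_cols)
  qed
  have hull: "co_cols F1 = co_cols F2"
    if "identifiable MM" "(F1,Q1) \<in> MM" "(F2,Q2) \<in> MM" "F1 * Q1 = F2 * Q2" for F1 Q1 F2 Q2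
  proof (rule equiv_pair_imp_co_cols_eq)
    show "equiv_pair (F1,Q1) (F2,Q2)" using that unfolding identifiable_def by fastforce
    show "dim_row F1 = dim_row F2" using carrier[OF that(2)] carrier[OF that(3)] by auto
  qed
  have "identifiable MM"
    if hulls: "\<forall>(F1,Q1)\<in>MM. \<forall>(F2,Q2)\<in>MM. F1 * Q1 = F2 * Q2 \<longrightarrow> co_cols F1 = co_cols F2"
      and indeps: "\<forall>(F,Q)\<in>MM. diffs_lin_indep F"
  proof (rule identifiable_if_co_cols_eq_and_affine_indep[OF carrier])
    show "co_cols F1 = co_cols F2"
      if "(F1,Q1) \<in> MM" "(F2,Q2) \<in> MM" "F1 * Q1 = F2 * Q2" for F1 Q1 F2 Q2
      using hulls that by blast
    show "affine_indep_cols F" if "(F,Q) \<in> MM" for F Q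
      using indeps that by (auto simp: diffs_lin_indep_iff_affine_indep_cols)
  qed
  with indep hull show ?thesis by blast
qed

end
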